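(* Let $\ell\ge 1$, let $k_1$ be a nonnegative integer and $k_2,\ldots,k_\ell$ positive integers, and let $D$ be a digraph with $\delta^+(D)\geq \sum_{i=1}^{\ell} k_i$. Then for every vertex $v\in V(D)$, $D$ contains (as a subdigraph) a path $P(k'_1,k'_2,\ldots,k'_\ell)$ with initial vertex $v$ such that $k'_i\ge k_i$ for every odd $i$ and $k'_i=k_i$ for every even $i$.
   Context: $\delta^+(D)$ denotes the minimum out-degree of $D$. For a nonnegative integer $k_1$ and positive integers $k_2,\ldots,k_\ell$, $P(k_1,\ldots,k_\ell)$ denotes the oriented path obtained from an undirected path $v_1v_2\ldots v_{\ell+1}$ by replacing, for each $i\in\{1,\ldots,\ell\}$, the edge $v_iv_{i+1}$ by a directed path of length $k_i$ from $v_i$ to $v_{i+1}$ if $i$ is odd, and from $v_{i+1}$ to $v_i$ if $i$ is even (if $k_1=0$ then $v_1=v_2$). Its initial vertex is $v_1$. *)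

theory Defs
  imports Main
begin

definition digraph :: "'a set \<Rightarrow> ('a \<times> 'a) set \<Rightarrow> bool" where
  "digraph V A \<longleftrightarrow> finite V \<and> A \<subseteq> V \<times> V \<and> (\<forall>x. (x, x) \<notin> A)"

definition outdeg :: "('a \<times> 'a) set \<Rightarrow> 'a \<Rightarrow> nat" where
  "outdeg A u = card {w. (u, w) \<in> A}"

definition min_outdeg :: "'a set \<Rightarrow> ('a \<times> 'a) set \<Rightarrow> nat" where
  "min_outdeg V A = Min (outdeg A ` V)"

text \<open>Orientation of the edges of P(k_1,...,k_l): list index j (0-based) is block i = j+1;
  block i is traversed forwards (True) iff i is odd, i.e. iff j is even.\<close>

definition edge_dirs :: "nat list \<Rightarrow> bool list" where
  "edge_dirs ks = concat (map (\<lambda>j. replicate (ks ! j) (even j)) [0..<length ks])"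

definition is_P_path :: "'a set \<Rightarrow> ('a \<times> 'a) set \<Rightarrow> nat list \<Rightarrow> 'a list \<Rightarrow> bool" where
  "is_P_path V A ks xs \<longleftrightarrow>
     distinct xs \<and> set xs \<subseteq> V \<and> length xs = sum_list ks + 1 \<and>
     (\<forall>e < sum_list ks.
        (if edge_dirs ks ! e then (xs ! e, xs ! (e + 1)) \<in> A
         else (xs ! (e + 1), xs ! e) \<in> A))"

end

theory Submission
  imports Defs
begin

text \<open>
  Induction on the number of blocks plus their total length, deleting vertices on the way.
  If k_1 > 0, take an arc v u and find P(k_1 - 1, k_2, ...) from u in D - v; every
  vertex loses at most one out-arc.
  If k_1 = 0, follow a maximal directed path X from v. All out-neighbours of its end lie on X,
  so its end closes a directed cycle of length > k_2. Let Y be the initial segment of X up to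
  its first vertex x reachable from the cycle; every vertex reachable from the cycle is the end of
  a long directed path of such vertices, so x is the end of a directed path W of length k_2
  none of whose vertices reaches Y - x. Delete the vertices reaching Y - x together with
  W - hd W: arcs from outside can only enter the deleted set in W - hd W, so out-degrees drop by
  at most k_2, and a path P(k_3, ...) from hd W in the remaining digraph extends Y followed
  by W backwards.
\<close>

abbreviation dwalk :: "('a \<times> 'a) set \<Rightarrow> 'a list \<Rightarrow> bool" where
  "dwalk A \<equiv> successively (\<lambda>x y. (x, y) \<in> A)"

lemma edge_dirs_Cons: "edge_dirs (k # ks) = replicate k True @ map Not (edge_dirs ks)"
proof -
  have "[0..<length (k # ks)] = 0 # map Suc [0..<length ks]"
    by (simp add: upt_conv_Cons map_Suc_upt del: upt_Suc)
  then show ?thesis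
    by (simp add: edge_dirs_def map_concat comp_def)
qed

lemma edge_dirs_Nil [simp]: "edge_dirs [] = []"
  by (simp add: edge_dirs_def)

lemma length_edge_dirs [simp]: "length (edge_dirs ks) = sum_list ks"
  by (induction ks) (auto simp: edge_dirs_Cons)

fun oriented_walk :: "('a \<times> 'a) set \<Rightarrow> bool list \<Rightarrow> 'a list \<Rightarrow> bool" where
  "oriented_walk A [] xs \<longleftrightarrow> length xs = 1"
| "oriented_walk A (d # ds) (x # y # xs) \<longleftrightarrow>
     (if d then (x, y) \<in> A else (y, x) \<in> A) \<and> oriented_walk A ds (y # xs)"
| "oriented_walk A (d # ds) _ \<longleftrightarrow> False"

lemma oriented_walk_iff_nth:
  "oriented_walk A ds xs \<longleftrightarrow> length xs = Suc (length ds) \<and>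
     (\<forall>e < length ds. if ds ! e then (xs ! e, xs ! Suc e) \<in> A else (xs ! Suc e, xs ! e) \<in> A)"
proof (induction A ds xs rule: oriented_walk.induct)
  case (2 A d ds x y xs)
  then show ?case by (auto simp: All_less_Suc2)
qed auto

lemma oriented_walk_append:
  "oriented_walk A ds xs \<Longrightarrow> oriented_walk A es ys \<Longrightarrow> last xs = hd ys \<Longrightarrow>
   oriented_walk A (ds @ es) (xs @ tl ys)"
proof (induction A ds xs rule: oriented_walk.induct)
  case (1 A xs)
  then show ?case by (cases ys; cases es) (auto simp: length_Suc_conv)
qed auto

lemma oriented_walk_if_dwalk:
  "dwalk A xs \<Longrightarrow> xs \<noteq> [] \<Longrightarrow> oriented_walk A (replicate (length xs - 1) True) xs"
  by (induction xs rule: induct_list012) auto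

lemma oriented_walk_rev_if_dwalk:
  "dwalk A xs \<Longrightarrow> xs \<noteq> [] \<Longrightarrow> oriented_walk A (replicate (length xs - 1) False) (rev xs)"
proof (induction xs rule: induct_list012)
  case (3 x y zs)
  then have "oriented_walk A (replicate (length zs) False @ [False]) (rev (y # zs) @ tl [y, x])"
    by (intro oriented_walk_append) (auto simp: last_rev)
  then show ?case by (simp add: replicate_append_same)
qed auto

lemma oriented_walk_mono: "oriented_walk A ds xs \<Longrightarrow> A \<subseteq> B \<Longrightarrow> oriented_walk B ds xs"
  by (induction A ds xs rule: oriented_walk.induct) (auto split: if_splits)

lemma is_P_path_iff_oriented_walk:
  "is_P_path V A ks xs \<longleftrightarrow> oriented_walk A (edge_dirs ks) xs \<and> distinct xs \<and> set xs \<subseteq> V"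
  by (auto simp: is_P_path_def oriented_walk_iff_nth)

lemma is_P_path_mono: "is_P_path V A ks xs \<Longrightarrow> V \<subseteq> V' \<Longrightarrow> A \<subseteq> A' \<Longrightarrow> is_P_path V' A' ks xs"
  by (auto simp: is_P_path_iff_oriented_walk intro: oriented_walk_mono)

lemma is_P_path_Suc_Cons:
  assumes "is_P_path V A (k # ks) xs" "(v, hd xs) \<in> A" "v \<in> V" "v \<notin> set xs"
  shows "is_P_path V A (Suc k # ks) (v # xs)"
proof -
  obtain y ys where "xs = y # ys" using assms(1) by (cases xs) (auto simp: is_P_path_def)
  then show ?thesis using assms by (simp add: is_P_path_iff_oriented_walk edge_dirs_Cons)
qed

lemma is_P_path_Cons_Cons:
  assumes "dwalk A Y" "Y \<noteq> []" "dwalk A W" "length W = Suc k" "last W = last Y"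
    and "is_P_path V A ks R" "hd R = hd W"
    and "distinct (Y @ tl (rev W) @ tl R)" "set Y \<union> set W \<subseteq> V"
  shows "is_P_path V A ((length Y - 1) # k # ks) (Y @ tl (rev W) @ tl R)"
proof -
  have "W \<noteq> []" using assms(4) by auto
  have walk_YW: "oriented_walk A (replicate (length Y - 1) True @ replicate k False) (Y @ tl (rev W))"
    using oriented_walk_append[OF oriented_walk_if_dwalk[OF assms(1,2)]
        oriented_walk_rev_if_dwalk[OF assms(3) \<open>W \<noteq> []\<close>]] assms(4,5) \<open>W \<noteq> []\<close>
    by (simp add: hd_rev)
  have "last (Y @ tl (rev W)) = hd R"
    using assms(2,4,5,7) \<open>W \<noteq> []\<close> by (cases "rev W") (auto simp: hd_append hd_rev)
  moreover have "oriented_walk A (edge_dirs ks) R"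
    using assms(6) by (simp add: is_P_path_iff_oriented_walk)
  ultimately have "oriented_walk A ((replicate (length Y - 1) True @ replicate k False) @ edge_dirs ks)
      ((Y @ tl (rev W)) @ tl R)"
    using oriented_walk_append[OF walk_YW] by blast
  moreover have "set (tl (rev W)) \<union> set (tl R) \<subseteq> V"
    using assms(6,9) by (cases "rev W"; cases R) (auto simp: is_P_path_def)
  ultimately show ?thesis using assms(8,9)
    by (auto simp: is_P_path_iff_oriented_walk edge_dirs_Cons comp_def)
qed

lemma dwalk_take: "dwalk A xs \<Longrightarrow> dwalk A (take n xs)"
  using successively_append_iff[of _ "take n xs" "drop n xs"] by simp

lemma dwalk_drop: "dwalk A xs \<Longrightarrow> dwalk A (drop n xs)"
  using successively_append_iff[of _ "take n xs" "drop n xs"] by simp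

lemma dwalk_reaches: "dwalk A xs \<Longrightarrow> y \<in> set xs \<Longrightarrow> (hd xs, y) \<in> A\<^sup>*"
  by (induction xs rule: induct_list012) (auto intro: converse_rtrancl_into_rtrancl)

lemma rtrancl_digraph_vertices:
  assumes "digraph V A" "x \<in> V" "(x, y) \<in> A\<^sup>*"
  shows "y \<in> V"
  using assms(3) by induction (use assms in \<open>auto simp: digraph_def\<close>)

lemma rotate_cycle_to_end:
  assumes "dwalk A C" "distinct C" "(last C, hd C) \<in> A" "c \<in> set C"
  shows "\<exists>Q. dwalk A Q \<and> distinct Q \<and> set Q = set C \<and> length Q = length C \<and> last Q = c"
proof -
  obtain t where t: "t < length C" "C ! t = c" using assms(4) by (auto simp: in_set_conv_nth)
  define Q where "Q = drop (Suc t) C @ take (Suc t) C"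
  have "dwalk A Q"
    using assms(1,3) t(1) dwalk_take dwalk_drop
    by (cases "Suc t < length C") (auto simp: Q_def successively_append_iff hd_take)
  moreover have "distinct Q" "set Q = set C"
    using assms(2) distinct_append[of "take (Suc t) C" "drop (Suc t) C"]
      set_append[of "take (Suc t) C" "drop (Suc t) C"] by (auto simp: Q_def)
  moreover have "length Q = length C" "last Q = c"
    using t by (auto simp: Q_def take_Suc_conv_app_nth)
  ultimately show ?thesis by blast
qed

definition cycle_then_path :: "('a \<times> 'a) set \<Rightarrow> 'a list \<Rightarrow> 'a list \<Rightarrow> bool" where
  "cycle_then_path A C Q \<longleftrightarrow> dwalk A Q \<and> distinct Q \<and> length C \<le> length Q \<and>
     set (take (length C) Q) = set C \<and> set (drop (length C) Q) \<inter> set C = {}"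

lemma cycle_then_path_step:
  assumes "dwalk A C" "distinct C" "(last C, hd C) \<in> A"
    and Q: "cycle_then_path A C Q" "C \<noteq> []" "(last Q, x) \<in> A"
  obtains Q' where "cycle_then_path A C Q'" "last Q' = x" "set Q' \<subseteq> insert x (set Q)"
proof -
  have C_Q: "set C \<subseteq> set Q" using Q(1) set_take_subset by (fastforce simp: cycle_then_path_def)
  consider "x \<in> set C" | "x \<notin> set C" "x \<in> set Q" | "x \<notin> set Q" by blast
  then show thesis
  proof cases
    case 1
    then obtain Q' where "dwalk A Q'" "distinct Q'" "set Q' = set C" "length Q' = length C" "last Q' = x"
      using rotate_cycle_to_end[OF assms(1-3)] by blast
    with C_Q show thesis by (intro that[of Q']) (auto simp: cycle_then_path_def)
  next
    case 2
    then obtain t where t: "t < length Q" "Q ! t = x" by (auto simp: in_set_conv_nth)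
    have "length C \<le> t"
    proof (rule ccontr)
      assume "\<not> length C \<le> t"
      then have "x \<in> set (take (length C) Q)" using t by (auto simp: in_set_conv_nth)
      then show False using Q(1) 2 by (simp add: cycle_then_path_def)
    qed
    let ?Q' = "take (Suc t) Q"
    have "set (drop (length C) ?Q') \<subseteq> set (drop (length C) Q)"
      by (metis drop_take set_take_subset)
    moreover have "take (length C) ?Q' = take (length C) Q" "last ?Q' = x"
      using t \<open>length C \<le> t\<close> by (auto simp: take_Suc_conv_app_nth)
    moreover have "set ?Q' \<subseteq> set Q" by (rule set_take_subset)
    ultimately show thesis using Q(1) t \<open>length C \<le> t\<close> dwalk_take
      by (intro that[of ?Q']) (auto simp: cycle_then_path_def)
  next
    case 3
    have "Q \<noteq> []" using Q(1,2) by (auto simp: cycle_then_path_def)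
    then have "cycle_then_path A C (Q @ [x])"
      using Q 3 C_Q by (auto simp: cycle_then_path_def successively_append_iff)
    then show thesis using that by simp
  qed
qed

lemma long_dpath_to_reachable:
  assumes "dwalk A C" "distinct C" "C \<noteq> []" "(last C, hd C) \<in> A" "(last C, x) \<in> A\<^sup>*"
  shows "\<exists>Q. dwalk A Q \<and> distinct Q \<and> length C \<le> length Q \<and>
    set Q \<subseteq> {y. (last C, y) \<in> A\<^sup>*} \<and> last Q = x"
proof -
  let ?M = "{y. (last C, y) \<in> A\<^sup>*}"
  have "\<exists>Q. cycle_then_path A C Q \<and> set Q \<subseteq> ?M \<and> last Q = x"
    using assms(5)
  proof (induction rule: rtrancl_induct)
    case base
    have "set C \<subseteq> ?M"
      using dwalk_reaches[OF assms(1)] assms(4) by (auto intro: converse_rtrancl_into_rtrancl)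
    then show ?case using assms(1,2) by (auto simp: cycle_then_path_def)
  next
    case (step y x)
    then obtain Q where "cycle_then_path A C Q" "set Q \<subseteq> ?M" "last Q = y" by blast
    moreover obtain Q' where "cycle_then_path A C Q'" "last Q' = x" "set Q' \<subseteq> insert x (set Q)"
      using cycle_then_path_step[OF assms(1,2,4) calculation(1) assms(3)] step(2) calculation(3) by blast
    ultimately show ?case using step(1,2) by (blast intro: rtrancl_into_rtrancl)
  qed
  then show ?thesis by (auto simp: cycle_then_path_def)
qed

lemma maximal_dpath:
  assumes "digraph V A" "v \<in> V"
  obtains X where "X \<noteq> []" "hd X = v" "distinct X" "set X \<subseteq> V" "dwalk A X"
    "\<And>w. (last X, w) \<in> A \<Longrightarrow> w \<in> set X"
proof -
  define P where "P = {X. X \<noteq> [] \<and> hd X = v \<and> distinct X \<and> set X \<subseteq> V \<and> dwalk A X}"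
  have "length Y < Suc (card V)" if "Y \<in> P" for Y
    using that assms(1) card_mono[of V "set Y"] distinct_card[of Y]
    by (auto simp: P_def digraph_def)
  moreover have "[v] \<in> P" using assms(2) by (simp add: P_def)
  ultimately obtain X where X: "X \<in> P" "\<And>Y. Y \<in> P \<Longrightarrow> length Y \<le> length X"
    using Lattices_Big.ex_has_greatest_nat[of "\<lambda>Y. Y \<in> P" "[v]" length] by blast
  have "w \<in> set X" if "(last X, w) \<in> A" for w
  proof (rule ccontr)
    assume "w \<notin> set X"
    moreover have "w \<in> V" using that assms(1) by (auto simp: digraph_def)
    ultimately have "X @ [w] \<in> P" using X(1) that by (auto simp: P_def successively_append_iff)
    then show False using X(2) by fastforce
  qed
  then show thesis using X(1) that by (auto simp: P_def)
qed

lemma far_out_neighbour_on_dpath: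
  assumes "digraph V A" "X \<noteq> []" "distinct X" "\<And>w. (last X, w) \<in> A \<Longrightarrow> w \<in> set X"
    and "0 < k" "k \<le> outdeg A (last X)"
  obtains j where "j + k \<le> length X - 1" "(last X, X ! j) \<in> A"
proof -
  define m where "m = length X - 1"
  have "\<exists>j. j + k \<le> m \<and> (last X, X ! j) \<in> A"
  proof (rule ccontr)
    assume far: "\<nexists>j. j + k \<le> m \<and> (last X, X ! j) \<in> A"
    have "{w. (last X, w) \<in> A} \<subseteq> (!) X ` {m + 1 - k..<m}"
    proof
      fix w assume wA: "w \<in> {w. (last X, w) \<in> A}"
      then obtain t where t: "t < length X" "X ! t = w"
        using assms(4) by (auto simp: in_set_conv_nth)
      have "t \<noteq> m" using wA t assms(1,2) by (auto simp: m_def last_conv_nth digraph_def)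
      moreover have "\<not> t + k \<le> m" using far wA t by auto
      ultimately show "w \<in> (!) X ` {m + 1 - k..<m}"
        using t by (intro rev_image_eqI[of t]) (auto simp: m_def)
    qed
    then have "outdeg A (last X) \<le> card ((!) X ` {m + 1 - k..<m})"
      unfolding outdeg_def by (rule card_mono[rotated]) simp
    also have "\<dots> < k" using card_image_le[of "{m + 1 - k..<m}" "(!) X"] assms(5) by simp
    finally show False using assms(6) by simp
  qed
  then show thesis using that by (auto simp: m_def)
qed

lemma dpath_with_long_dpath_into_its_end:
  assumes D: "digraph V A" and "v \<in> V" and deg: "\<forall>u\<in>V. k \<le> outdeg A u" and "0 < k"
  obtains Y W where "Y \<noteq> []" "hd Y = v" "distinct Y" "set Y \<subseteq> V" "dwalk A Y"
    "length W = Suc k" "distinct W" "set W \<subseteq> V" "dwalk A W" "last W = last Y"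
    "\<And>w y. w \<in> set W \<Longrightarrow> y \<in> set (butlast Y) \<Longrightarrow> (w, y) \<notin> A\<^sup>*"
proof -
  obtain X where X: "X \<noteq> []" "hd X = v" "distinct X" "set X \<subseteq> V" "dwalk A X"
    "\<And>w. (last X, w) \<in> A \<Longrightarrow> w \<in> set X"
    using maximal_dpath[OF D \<open>v \<in> V\<close>] by blast
  have "last X \<in> V" using X(1,4) by (meson last_in_set subsetD)
  then have "k \<le> outdeg A (last X)" using deg by blast
  then obtain j where j: "j + k \<le> length X - 1" "(last X, X ! j) \<in> A"
    using far_out_neighbour_on_dpath[OF D X(1,3,6) \<open>0 < k\<close>] by blast
  define C where "C = drop j X"
  have C: "dwalk A C" "distinct C" "C \<noteq> []" "last C = last X" "hd C = X ! j" "Suc k \<le> length C"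
    using j X(3,5) \<open>0 < k\<close> dwalk_drop by (auto simp: C_def hd_drop_conv_nth)
  define M where "M = {y. (last X, y) \<in> A\<^sup>*}"
  have "j < length X \<and> X ! j \<in> M" using j \<open>0 < k\<close> by (auto simp: M_def)
  then obtain i where "i < length X \<and> X ! i \<in> M" "\<forall>t<i. \<not> (t < length X \<and> X ! t \<in> M)"
    using exists_least_iff[of "\<lambda>t. t < length X \<and> X ! t \<in> M"] by blast
  then have i: "i < length X" "X ! i \<in> M" "\<And>t. t < i \<Longrightarrow> X ! t \<notin> M" by auto
  have "(last C, hd C) \<in> A" "(last C, X ! i) \<in> A\<^sup>*" using C(4,5) j(2) i(2) by (auto simp: M_def)
  moreover have "M = {y. (last C, y) \<in> A\<^sup>*}" using C(4) by (simp add: M_def)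
  ultimately obtain Q where Q: "dwalk A Q" "distinct Q" "length C \<le> length Q" "set Q \<subseteq> M" "last Q = X ! i"
    using long_dpath_to_reachable[OF C(1-3)] by metis
  define W where "W = drop (length Q - Suc k) Q"
  define Y where "Y = take (Suc i) X"
  have MV: "M \<subseteq> V" using rtrancl_digraph_vertices[OF D \<open>last X \<in> V\<close>] by (auto simp: M_def)
  have W: "length W = Suc k" "distinct W" "dwalk A W" "set W \<subseteq> M" "last W = X ! i"
    using Q C(6) dwalk_drop by (auto simp: W_def dest: in_set_dropD)
  have Y: "Y \<noteq> []" "hd Y = v" "distinct Y" "set Y \<subseteq> V" "dwalk A Y"
    using X dwalk_take by (auto simp: Y_def dest: in_set_takeD)
  have "last Y = X ! i" "butlast Y = take i X"
    using i(1) by (auto simp: Y_def take_Suc_conv_app_nth)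
  have "(w, y) \<notin> A\<^sup>*" if w: "w \<in> set W" and y: "y \<in> set (butlast Y)" for w y
  proof
    assume "(w, y) \<in> A\<^sup>*"
    then have "y \<in> M" using W(4) w by (auto simp: M_def)
    moreover obtain t where "t < i" "y = X ! t"
      using y \<open>butlast Y = take i X\<close> i(1) by (auto simp: in_set_conv_nth)
    ultimately show False using i(3) by blast
  qed
  with W(4,5) MV \<open>last Y = X ! i\<close> show thesis by (intro that[OF Y W(1,2) _ W(3)]) auto
qed

lemma digraph_delete_vertices: "digraph V A \<Longrightarrow> digraph (V - S) (Restr A (V - S))"
  by (auto simp: digraph_def)

lemma outdeg_delete_vertices:
  assumes "digraph V A" "\<forall>u\<in>V. card T + d \<le> outdeg A u" "finite T"
    and "\<And>u w. u \<notin> S \<Longrightarrow> (u, w) \<in> A \<Longrightarrow> w \<in> S \<Longrightarrow> w \<in> T"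
  shows "\<forall>u\<in>V - S. d \<le> outdeg (Restr A (V - S)) u"
proof
  fix u assume u: "u \<in> V - S"
  have "{w. (u, w) \<in> A} - T \<subseteq> {w. (u, w) \<in> Restr A (V - S)}"
    using assms(1,4) u by (auto simp: digraph_def)
  moreover have "finite {w. (u, w) \<in> Restr A (V - S)}"
    using assms(1) by (auto simp: digraph_def intro: finite_subset)
  ultimately have "card ({w. (u, w) \<in> A} - T) \<le> outdeg (Restr A (V - S)) u"
    unfolding outdeg_def by (rule card_mono[rotated])
  then show "d \<le> outdeg (Restr A (V - S)) u"
    using diff_card_le_card_Diff[OF assms(3), of "{w. (u, w) \<in> A}"] assms(2) u
    by (force simp: outdeg_def)
qed

definition stretches :: "nat list \<Rightarrow> nat list \<Rightarrow> bool" where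
  "stretches ks' ks \<longleftrightarrow> length ks' = length ks \<and>
     (\<forall>i < length ks. if even i then ks' ! i \<ge> ks ! i else ks' ! i = ks ! i)"

lemma stretches_Suc_Suc_iff: "stretches (Suc k' # ks') (Suc k # ks) \<longleftrightarrow> stretches (k' # ks') (k # ks)"
  by (auto simp: stretches_def All_less_Suc2)

lemma stretches_Cons_Cons_iff:
  "stretches (a' # b' # ks') (a # b # ks) \<longleftrightarrow> a \<le> a' \<and> b' = b \<and> stretches ks' ks"
  by (auto simp: stretches_def All_less_Suc2)

definition has_P_path_from :: "'a set \<Rightarrow> ('a \<times> 'a) set \<Rightarrow> nat list \<Rightarrow> 'a \<Rightarrow> bool" where
  "has_P_path_from V A ks v \<longleftrightarrow> (\<exists>ks' xs. stretches ks' ks \<and> is_P_path V A ks' xs \<and> hd xs = v)"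

lemma has_P_path_from_trivial:
  assumes "v \<in> V" "ks = [] \<or> ks = [0]"
  shows "has_P_path_from V A ks v"
  using assms unfolding has_P_path_from_def
  by (intro exI[of _ ks] exI[of _ "[v]"]) (auto simp: stretches_def is_P_path_def edge_dirs_Cons)

lemma has_P_path_from_Suc_Cons:
  fixes v :: 'a
  assumes D: "digraph V A" and "v \<in> V" and deg: "\<forall>u\<in>V. Suc (sum_list (k # ks)) \<le> outdeg A u"
    and IH: "\<And>V' A' (w :: 'a). digraph V' A' \<Longrightarrow> w \<in> V' \<Longrightarrow> \<forall>u\<in>V'. sum_list (k # ks) \<le> outdeg A' u \<Longrightarrow>
      has_P_path_from V' A' (k # ks) w"
  shows "has_P_path_from V A (Suc k # ks) v"
proof -
  have "card {w. (v, w) \<in> A} \<noteq> 0" using deg \<open>v \<in> V\<close> by (fastforce simp: outdeg_def)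
  then obtain u where vu: "(v, u) \<in> A" by fastforce
  have "u \<in> V - {v}" using vu D by (auto simp: digraph_def)
  moreover have "\<forall>u\<in>V - {v}. sum_list (k # ks) \<le> outdeg (Restr A (V - {v})) u"
    using outdeg_delete_vertices[OF D, where T = "{v}" and S = "{v}"] deg by simp
  ultimately have "has_P_path_from (V - {v}) (Restr A (V - {v})) (k # ks) u"
    by (rule IH[OF digraph_delete_vertices[OF D]])
  then obtain ks' xs where
    P: "stretches ks' (k # ks)" "is_P_path (V - {v}) (Restr A (V - {v})) ks' xs" "hd xs = u"
    unfolding has_P_path_from_def by blast
  obtain c r where ks': "ks' = c # r" using P(1) by (cases ks') (auto simp: stretches_def)
  have "is_P_path V A (c # r) xs" using P(2) unfolding ks' by (rule is_P_path_mono) auto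
  moreover have "v \<notin> set xs" using P(2) by (auto simp: is_P_path_def)
  ultimately have "is_P_path V A (Suc c # r) (v # xs)"
    using vu P(3) \<open>v \<in> V\<close> by (simp add: is_P_path_Suc_Cons)
  then show ?thesis using P(1) unfolding has_P_path_from_def ks'
    by (intro exI[of _ "Suc c # r"] exI[of _ "v # xs"]) (simp add: stretches_Suc_Suc_iff)
qed

lemma set_entered_only_through_tl:
  assumes "W \<noteq> []" "distinct W" "\<And>w y. w \<in> set W \<Longrightarrow> y \<in> Z \<Longrightarrow> (w, y) \<notin> A\<^sup>*"
  obtains S where "Z \<subseteq> S" "set (tl W) \<subseteq> S" "hd W \<notin> S"
    "\<And>u w. u \<notin> S \<Longrightarrow> (u, w) \<in> A \<Longrightarrow> w \<in> S \<Longrightarrow> w \<in> set (tl W)"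
proof
  let ?S = "{y. \<exists>z\<in>Z. (y, z) \<in> A\<^sup>*} \<union> set (tl W)"
  show "Z \<subseteq> ?S" "set (tl W) \<subseteq> ?S" by auto
  have "hd W \<notin> set (tl W)" using assms(1,2) by (cases W) auto
  then show "hd W \<notin> ?S" using assms(1) assms(3)[of "hd W"] by auto
  show "w \<in> set (tl W)" if "u \<notin> ?S" "(u, w) \<in> A" "w \<in> ?S" for u w
    using that by (auto intro: converse_rtrancl_into_rtrancl)
qed

lemma distinct_append_tl_rev_tl:
  assumes "distinct Y" "distinct W" "distinct R" "Y \<noteq> []" "2 \<le> length W"
    and "last W = last Y" "hd R = hd W" "set (butlast Y) \<inter> set W = {}"
    and "set Y \<subseteq> S" "set (tl W) \<subseteq> S" "set R \<inter> S = {}"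
  shows "distinct (Y @ tl (rev W) @ tl R)"
proof -
  obtain Y' y where Y: "Y = Y' @ [y]" using assms(4) by (cases Y rule: rev_cases) auto
  obtain W' w where W: "W = W' @ [w]" using assms(5) by (cases W rule: rev_cases) auto
  with assms(5) have "W' \<noteq> []" by auto
  have tl_R: "hd R \<notin> set (tl R)" "set (tl R) \<subseteq> set R"
    using assms(3) by (cases R, auto)+
  have "set Y \<inter> set W' = {}" using assms(2,6,8) Y W by auto
  moreover have "set Y \<inter> set (tl R) = {}" using assms(9,11) tl_R(2) by blast
  moreover have "set W' \<subseteq> insert (hd R) S"
    using assms(7,10) W \<open>W' \<noteq> []\<close> by (cases W') auto
  then have "set W' \<inter> set (tl R) = {}" using assms(11) tl_R by blast
  moreover have "distinct W'" "distinct (tl R)" using assms(2,3) W by (simp_all add: distinct_tl)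
  ultimately show ?thesis using assms(1) W by (auto simp: Int_commute)
qed

lemma has_P_path_from_Zero_Cons:
  fixes v :: 'a
  assumes D: "digraph V A" and "v \<in> V" and "0 < k" and deg: "\<forall>u\<in>V. k + sum_list ks \<le> outdeg A u"
    and IH: "\<And>V' A' (w :: 'a). digraph V' A' \<Longrightarrow> w \<in> V' \<Longrightarrow> \<forall>u\<in>V'. sum_list ks \<le> outdeg A' u \<Longrightarrow>
      has_P_path_from V' A' ks w"
  shows "has_P_path_from V A (0 # k # ks) v"
proof -
  have "\<forall>u\<in>V. k \<le> outdeg A u" using deg by auto
  then obtain Y W where Y: "Y \<noteq> []" "hd Y = v" "distinct Y" "set Y \<subseteq> V" "dwalk A Y"
    and W: "length W = Suc k" "distinct W" "set W \<subseteq> V" "dwalk A W" "last W = last Y"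
    and unreachable: "\<And>w y. w \<in> set W \<Longrightarrow> y \<in> set (butlast Y) \<Longrightarrow> (w, y) \<notin> A\<^sup>*"
    using dpath_with_long_dpath_into_its_end[OF D \<open>v \<in> V\<close> _ \<open>0 < k\<close>] by metis
  have "W \<noteq> []" using W(1) by auto
  obtain S where S: "set (butlast Y) \<subseteq> S" "set (tl W) \<subseteq> S" "hd W \<notin> S"
    "\<And>u w. u \<notin> S \<Longrightarrow> (u, w) \<in> A \<Longrightarrow> w \<in> S \<Longrightarrow> w \<in> set (tl W)"
    using set_entered_only_through_tl[OF \<open>W \<noteq> []\<close> W(2) unreachable] by blast
  have "card (set (tl W)) = k" using W(1,2) by (simp add: distinct_card distinct_tl)
  then have "\<forall>u\<in>V - S. sum_list ks \<le> outdeg (Restr A (V - S)) u"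
    using outdeg_delete_vertices[OF D, where T = "set (tl W)" and S = S] deg S(4) by simp
  with S(3) W(3) \<open>W \<noteq> []\<close> have "has_P_path_from (V - S) (Restr A (V - S)) ks (hd W)"
    by (intro IH[OF digraph_delete_vertices[OF D]]) auto
  then obtain ks' R where R: "stretches ks' ks" "is_P_path (V - S) (Restr A (V - S)) ks' R" "hd R = hd W"
    unfolding has_P_path_from_def by blast
  have "last Y \<in> set (tl W)" using W(1,5) \<open>0 < k\<close> by (cases W) (auto, metis last_in_set)
  then have "set Y \<subseteq> S" using S(1,2) Y(1) by (cases Y rule: rev_cases) auto
  moreover have "set (butlast Y) \<inter> set W = {}" using unreachable by blast
  moreover have "distinct R" "set R \<inter> S = {}" using R(2) by (auto simp: is_P_path_def)
  moreover have "2 \<le> length W" using W(1) \<open>0 < k\<close> by simp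
  ultimately have "distinct (Y @ tl (rev W) @ tl R)"
    using distinct_append_tl_rev_tl[OF Y(3) W(2) _ Y(1) _ W(5) R(3) _ _ S(2)] by blast
  then have "is_P_path V A ((length Y - 1) # k # ks') (Y @ tl (rev W) @ tl R)"
    using is_P_path_Cons_Cons[OF Y(5,1) W(4,1,5) is_P_path_mono[OF R(2)] R(3)] Y(4) W(3)
    by auto
  moreover have "stretches ((length Y - 1) # k # ks') (0 # k # ks)"
    using R(1) by (simp add: stretches_Cons_Cons_iff)
  ultimately show ?thesis using Y(1,2) unfolding has_P_path_from_def by fastforce
qed

lemma has_P_path_from_if_outdeg_ge:
  fixes v :: 'a
  assumes "digraph V A" "v \<in> V" "\<forall>i. 1 \<le> i \<and> i < length ks \<longrightarrow> ks ! i > 0"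
    and "\<forall>u\<in>V. sum_list ks \<le> outdeg A u"
  shows "has_P_path_from V A ks v"
  using assms
proof (induction ks arbitrary: V A v rule: measure_induct_rule[of "\<lambda>ks. length ks + sum_list ks"])
  case (less ks)
  consider "ks = [] \<or> ks = [0]" | k ks' where "ks = Suc k # ks'" | k ks' where "ks = 0 # k # ks'"
    by (metis list.exhaust not0_implies_Suc)
  then show ?case
  proof cases
    case 1
    then show ?thesis using less.prems(2) by (intro has_P_path_from_trivial)
  next
    case (2 k ks')
    have "\<forall>i. 1 \<le> i \<and> i < length (k # ks') \<longrightarrow> (k # ks') ! i > 0"
      using less.prems(3) 2 by (auto simp: nth_Cons')
    then have IH: "has_P_path_from V' A' (k # ks') w"
      if "digraph V' A'" "w \<in> V'" "\<forall>u\<in>V'. sum_list (k # ks') \<le> outdeg A' u" for V' A' and w :: 'a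
      using less.IH[of "k # ks'"] that 2 by simp
    have "\<forall>u\<in>V. Suc (sum_list (k # ks')) \<le> outdeg A u" using less.prems(4) 2 by simp
    from has_P_path_from_Suc_Cons[OF less.prems(1,2) this IH] show ?thesis unfolding 2 .
  next
    case (3 k ks')
    have "0 < k" using less.prems(3)[rule_format, of 1] 3 by simp
    have "\<forall>i. 1 \<le> i \<and> i < length ks' \<longrightarrow> ks' ! i > 0"
      using less.prems(3) 3 by (auto dest: spec[of _ "Suc (Suc _)"])
    then have IH: "has_P_path_from V' A' ks' w"
      if "digraph V' A'" "w \<in> V'" "\<forall>u\<in>V'. sum_list ks' \<le> outdeg A' u" for V' A' and w :: 'a
      using less.IH[of ks'] that 3 by simp
    have deg: "\<forall>u\<in>V. k + sum_list ks' \<le> outdeg A u" using less.prems(4) 3 by simp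
    show ?thesis unfolding 3 by (rule has_P_path_from_Zero_Cons[OF less.prems(1,2) \<open>0 < k\<close> deg IH])
  qed
qed

theorem theorem19:
  fixes V :: "'a set" and A :: "('a \<times> 'a) set" and ks :: "nat list" and v :: 'a
  assumes "digraph V A"
    and "length ks \<ge> 1"
    and "\<forall>i. 1 \<le> i \<and> i < length ks \<longrightarrow> ks ! i > 0"
    and "v \<in> V"
    and "min_outdeg V A \<ge> sum_list ks"
  shows "\<exists>ks' xs. length ks' = length ks \<and>
           (\<forall>i < length ks. if even i then ks' ! i \<ge> ks ! i else ks' ! i = ks ! i) \<and>
           is_P_path V A ks' xs \<and> hd xs = v"
proof -
  have "finite V" using assms(1) by (simp add: digraph_def)
  then have "\<forall>u\<in>V. sum_list ks \<le> outdeg A u"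
    using assms(5) by (auto simp: min_outdeg_def intro: order.trans[OF _ Min_le])
  with assms(1,4,3) have "has_P_path_from V A ks v"
    by (rule has_P_path_from_if_outdeg_ge)
  then show ?thesis by (auto simp: has_P_path_from_def stretches_def)
qed

end
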